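(* Let $p$ be a prime and $G=\mathbb{S}_p$ or $\mathbb{A}_p$. If $\mathcal{C}$ is a conjugacy class of elements of order $p$ in $G$, then $K_{\mathcal{C}}$ is irreducible.
   Context: For a finite group $G$ and a subset $\mathcal{C}\subseteq G\setminus\{1\}$ closed under conjugation, the Killing form $K_{\mathcal{C}}$ is the bilinear form on the complex vector space with basis $\mathcal{C}$ given on basis elements by $K_{\mathcal{C}}(a,b)=|C_G(ab)\cap\mathcal{C}|$. $K_{\mathcal{C}}$ is irreducible if the graph with vertex set $\mathcal{C}$, in which distinct $a,b$ are adjacent iff $C_G(ab)\cap\mathcal{C}\neq\emptyset$, is connected, and reducible otherwise. *)

theory Defs
  imports "HOL-Computational_Algebra.Primes" "HOL-Algebra.Sym_Groups" "HOL-Algebra.Multiplicative_Group"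
begin

definition conj_class :: "('a, 'b) monoid_scheme \<Rightarrow> 'a \<Rightarrow> 'a set" where
  "conj_class G x = {g \<otimes>\<^bsub>G\<^esub> x \<otimes>\<^bsub>G\<^esub> inv\<^bsub>G\<^esub> g | g. g \<in> carrier G}"

definition centralizer_elt :: "('a, 'b) monoid_scheme \<Rightarrow> 'a \<Rightarrow> 'a set" where
  "centralizer_elt G y = {g \<in> carrier G. g \<otimes>\<^bsub>G\<^esub> y = y \<otimes>\<^bsub>G\<^esub> g}"

definition killing_graph_edges :: "('a, 'b) monoid_scheme \<Rightarrow> 'a set \<Rightarrow> ('a \<times> 'a) set" where
  "killing_graph_edges G C =
     {(a, b). a \<in> C \<and> b \<in> C \<and> a \<noteq> b \<and> centralizer_elt G (a \<otimes>\<^bsub>G\<^esub> b) \<inter> C \<noteq> {}}"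

text \<open>K_C is irreducible iff that graph (vertex set C) is connected.\<close>
definition killing_irreducible :: "('a, 'b) monoid_scheme \<Rightarrow> 'a set \<Rightarrow> bool" where
  "killing_irreducible G C \<longleftrightarrow>
     (\<forall>a\<in>C. \<forall>b\<in>C. (a, b) \<in> (killing_graph_edges G C)\<^sup>*)"

end

theory Submission
  imports Defs
begin

(* Conjugation preserves the graph on C, so the g with g x g^-1 in the connected component
   of x form a subgroup H of G, and K_C is irreducible as soon as H = G. An element of order p
   in S_p is a p-cycle, conjugate in S_p to s = (1 2 ... p); this conjugation is an automorphism
   of both S_p and A_p, so we may take x = s. Now k lies in H whenever some conjugate of s
   commutes with s (k s k^-1). Explicit such k give H a 3-cycle of consecutive points;
   conjugating by powers of s and by each other, these generate all 3-cycles, hence A_p, and for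
   G = S_p one more explicit k is odd. *)

section \<open>The stabiliser of a connected component\<close>

definition component_stabilizer :: "('a, 'b) monoid_scheme \<Rightarrow> 'a \<Rightarrow> 'a set" where
  "component_stabilizer G x =
     {g \<in> carrier G. (x, g \<otimes>\<^bsub>G\<^esub> x \<otimes>\<^bsub>G\<^esub> inv\<^bsub>G\<^esub> g) \<in> (killing_graph_edges G (conj_class G x))\<^sup>*}"

lemma mem_component_stabilizer:
  "g \<in> component_stabilizer G x \<longleftrightarrow>
     g \<in> carrier G \<and> (x, g \<otimes>\<^bsub>G\<^esub> x \<otimes>\<^bsub>G\<^esub> inv\<^bsub>G\<^esub> g) \<in> (killing_graph_edges G (conj_class G x))\<^sup>*"
  unfolding component_stabilizer_def by simp

context group
begin

lemma inv_mult_cancel_left [simp]: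
  "a \<in> carrier G \<Longrightarrow> z \<in> carrier G \<Longrightarrow> inv a \<otimes> (a \<otimes> z) = z"
  by (simp add: m_assoc[symmetric])

lemma mult_inv_cancel_left [simp]:
  "a \<in> carrier G \<Longrightarrow> z \<in> carrier G \<Longrightarrow> a \<otimes> (inv a \<otimes> z) = z"
  by (simp add: m_assoc[symmetric])

lemma conj_class_subset_carrier: "x \<in> carrier G \<Longrightarrow> conj_class G x \<subseteq> carrier G"
  unfolding conj_class_def by auto

lemma conj_in_conj_class: "g \<in> carrier G \<Longrightarrow> g \<otimes> x \<otimes> inv g \<in> conj_class G x"
  unfolding conj_class_def by blast

lemma conj_class_conj_closed:
  assumes "y \<in> conj_class G x" "x \<in> carrier G" "g \<in> carrier G"
  shows "g \<otimes> y \<otimes> inv g \<in> conj_class G x"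
proof -
  obtain h where h: "h \<in> carrier G" "y = h \<otimes> x \<otimes> inv h"
    using assms(1) unfolding conj_class_def by blast
  then have "g \<otimes> y \<otimes> inv g = (g \<otimes> h) \<otimes> x \<otimes> inv (g \<otimes> h)"
    using assms(2,3) by (simp add: inv_mult_group m_assoc)
  then show ?thesis
    using h(1) assms(3) conj_in_conj_class[of "g \<otimes> h" x] by simp
qed

lemma self_in_conj_class: "x \<in> carrier G \<Longrightarrow> x \<in> conj_class G x"
  using conj_in_conj_class[of \<one> x] by simp

lemma conj_class_subset_of_mem:
  assumes "y \<in> conj_class G x" "x \<in> carrier G"
  shows "conj_class G y \<subseteq> conj_class G x"
  using conj_class_conj_closed[OF assms] unfolding conj_class_def[of G y] by blast

lemma conj_class_of_conj:
  assumes "x \<in> carrier G" "g \<in> carrier G"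
  shows "conj_class G (g \<otimes> x \<otimes> inv g) = conj_class G x"
proof
  show "conj_class G (g \<otimes> x \<otimes> inv g) \<subseteq> conj_class G x"
    using assms by (intro conj_class_subset_of_mem conj_in_conj_class)
  have "x = inv g \<otimes> (g \<otimes> x \<otimes> inv g) \<otimes> inv (inv g)"
    using assms by (simp add: m_assoc)
  then have "x \<in> conj_class G (g \<otimes> x \<otimes> inv g)"
    using assms conj_in_conj_class[of "inv g" "g \<otimes> x \<otimes> inv g"] by simp
  then show "conj_class G x \<subseteq> conj_class G (g \<otimes> x \<otimes> inv g)"
    using assms by (intro conj_class_subset_of_mem) simp_all
qed

lemma inner_iso:
  assumes "g \<in> carrier G"
  shows "(\<lambda>h. g \<otimes> h \<otimes> inv g) \<in> iso G G"
proof -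
  have "(\<lambda>h. g \<otimes> h \<otimes> inv g) \<in> hom G G"
    by (rule homI) (use assms in \<open>simp_all add: m_assoc\<close>)
  moreover have "bij_betw (\<lambda>h. g \<otimes> h \<otimes> inv g) (carrier G) (carrier G)"
    by (rule bij_betw_byWitness[where f' = "\<lambda>h. inv g \<otimes> h \<otimes> g"])
      (use assms in \<open>auto simp: m_assoc\<close>)
  ultimately show ?thesis
    unfolding iso_def by blast
qed

lemma killing_graph_edges_iso:
  assumes "group H" "\<phi> \<in> iso G H" "C \<subseteq> carrier G"
    and "(a, b) \<in> killing_graph_edges G C"
  shows "(\<phi> a, \<phi> b) \<in> killing_graph_edges H (\<phi> ` C)"
proof -
  interpret group_hom G H \<phi>
    using assms(1,2) by (simp add: group_hom_def group_hom_axioms_def iso_imp_homomorphism is_group)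
  obtain c where ab: "a \<in> C" "b \<in> C" "a \<noteq> b" and c: "c \<in> C" "c \<otimes> (a \<otimes> b) = a \<otimes> b \<otimes> c"
    using assms(4) unfolding killing_graph_edges_def centralizer_elt_def by blast
  have carr: "a \<in> carrier G" "b \<in> carrier G" "c \<in> carrier G"
    using ab c assms(3) by auto
  have "inj_on \<phi> (carrier G)"
    using assms(2) by (simp add: iso_def bij_betw_def)
  then have "\<phi> a \<noteq> \<phi> b"
    using ab(3) carr by (meson inj_onD)
  moreover have "\<phi> c \<otimes>\<^bsub>H\<^esub> (\<phi> a \<otimes>\<^bsub>H\<^esub> \<phi> b) = \<phi> a \<otimes>\<^bsub>H\<^esub> \<phi> b \<otimes>\<^bsub>H\<^esub> \<phi> c"
    using c(2) carr by (simp flip: hom_mult)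
  moreover have "\<phi> c \<in> carrier H \<inter> \<phi> ` C"
    using c(1) carr by simp
  ultimately show ?thesis
    using ab unfolding killing_graph_edges_def centralizer_elt_def by blast
qed

lemma killing_graph_rtrancl_iso:
  assumes "group H" "\<phi> \<in> iso G H" "C \<subseteq> carrier G"
    and "(a, b) \<in> (killing_graph_edges G C)\<^sup>*"
  shows "(\<phi> a, \<phi> b) \<in> (killing_graph_edges H (\<phi> ` C))\<^sup>*"
  using assms(4)
proof (induction rule: rtrancl_induct)
  case (step b c)
  then show ?case
    using killing_graph_edges_iso[OF assms(1-3) step(2)] by simp
qed simp

lemma conj_class_iso:
  assumes "group H" "\<phi> \<in> iso G H" "x \<in> carrier G"
  shows "\<phi> ` conj_class G x = conj_class H (\<phi> x)"
proof -
  have in_class: "g \<otimes> x \<otimes> inv g \<in> conj_class G x" if "g \<in> carrier G" for g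
    using that by (rule conj_in_conj_class)
  interpret group_hom G H \<phi>
    using assms(1,2) by (simp add: group_hom_def group_hom_axioms_def iso_imp_homomorphism is_group)
  have conj: "\<phi> (g \<otimes> x \<otimes> inv g) = \<phi> g \<otimes>\<^bsub>H\<^esub> \<phi> x \<otimes>\<^bsub>H\<^esub> inv\<^bsub>H\<^esub> \<phi> g"
    if "g \<in> carrier G" for g
    using that assms(3) by simp
  have surj: "\<phi> ` carrier G = carrier H"
    using assms(2) unfolding iso_def bij_betw_def by blast
  show ?thesis
  proof (intro equalityI subsetI)
    fix z assume "z \<in> \<phi> ` conj_class G x"
    then show "z \<in> conj_class H (\<phi> x)"
      using conj unfolding conj_class_def by auto
  next
    fix z assume "z \<in> conj_class H (\<phi> x)"
    then obtain h where h: "h \<in> carrier H" "z = h \<otimes>\<^bsub>H\<^esub> \<phi> x \<otimes>\<^bsub>H\<^esub> inv\<^bsub>H\<^esub> h"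
      unfolding conj_class_def by blast
    obtain g where g: "g \<in> carrier G" "h = \<phi> g"
      using h(1) surj by (metis imageE)
    then have "z = \<phi> (g \<otimes> x \<otimes> inv g)"
      using h(2) conj by simp
    then show "z \<in> \<phi> ` conj_class G x"
      using in_class[OF g(1)] by simp
  qed
qed

lemma killing_irreducible_iso:
  assumes "group H" "\<phi> \<in> iso G H" "x \<in> carrier G"
    and "killing_irreducible G (conj_class G x)"
  shows "killing_irreducible H (conj_class H (\<phi> x))"
  unfolding killing_irreducible_def conj_class_iso[OF assms(1-3), symmetric]
proof (intro ballI)
  fix a' b' assume "a' \<in> \<phi> ` conj_class G x" "b' \<in> \<phi> ` conj_class G x"
  then obtain a b where "a \<in> conj_class G x" "b \<in> conj_class G x" "a' = \<phi> a" "b' = \<phi> b"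
    by blast
  then show "(a', b') \<in> (killing_graph_edges H (\<phi> ` conj_class G x))\<^sup>*"
    using assms(4) killing_graph_rtrancl_iso[OF assms(1,2) conj_class_subset_carrier[OF assms(3)]]
    unfolding killing_irreducible_def by blast
qed

lemma sym_killing_graph_edges:
  assumes x: "x \<in> carrier G"
  shows "sym (killing_graph_edges G (conj_class G x))"
proof (rule symI)
  let ?C = "conj_class G x"
  fix a b assume "(a, b) \<in> killing_graph_edges G ?C"
  then obtain c where ab: "a \<in> ?C" "b \<in> ?C" "a \<noteq> b"
    and c: "c \<in> ?C" "c \<in> carrier G" "c \<otimes> (a \<otimes> b) = a \<otimes> b \<otimes> c"
    unfolding killing_graph_edges_def centralizer_elt_def by blast
  have a: "a \<in> carrier G" and b: "b \<in> carrier G"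
    using ab conj_class_subset_carrier[OF x] by auto
  (* b a = inv a (a b) a, so conjugation by inv a carries the centralizer of a b to that of b a *)
  have c': "inv a \<otimes> c \<otimes> a \<in> ?C"
    using conj_class_conj_closed[OF c(1) x, of "inv a"] a by simp
  have "(inv a \<otimes> c \<otimes> a) \<otimes> (b \<otimes> a) = inv a \<otimes> (c \<otimes> (a \<otimes> b)) \<otimes> a"
    using a b c(2) by (simp add: m_assoc)
  also have "\<dots> = (b \<otimes> a) \<otimes> (inv a \<otimes> c \<otimes> a)"
    using a b c(2,3) by (simp add: m_assoc)
  finally have "inv a \<otimes> c \<otimes> a \<in> centralizer_elt G (b \<otimes> a)"
    using a c(2) unfolding centralizer_elt_def by simp
  then show "(b, a) \<in> killing_graph_edges G ?C"
    using ab c' unfolding killing_graph_edges_def by auto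
qed

lemma killing_graph_rtrancl_conj:
  assumes "x \<in> carrier G" "g \<in> carrier G"
    and "(a, b) \<in> (killing_graph_edges G (conj_class G x))\<^sup>*"
  shows "(g \<otimes> a \<otimes> inv g, g \<otimes> b \<otimes> inv g) \<in> (killing_graph_edges G (conj_class G x))\<^sup>*"
proof -
  have "(\<lambda>h. g \<otimes> h \<otimes> inv g) ` conj_class G x = conj_class G x"
    using conj_class_iso[OF is_group inner_iso] conj_class_of_conj assms(1,2) by simp
  then show ?thesis
    using killing_graph_rtrancl_iso[OF is_group inner_iso conj_class_subset_carrier, of g x a b] assms
    by simp
qed

lemma self_in_component_stabilizer: "x \<in> carrier G \<Longrightarrow> x \<in> component_stabilizer G x"
  unfolding component_stabilizer_def by (simp add: m_assoc)

lemma component_stabilizer_subgroup: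
  assumes x: "x \<in> carrier G"
  shows "subgroup (component_stabilizer G x) G"
proof -
  let ?R = "(killing_graph_edges G (conj_class G x))\<^sup>*"
  have mult: "g \<otimes> h \<in> component_stabilizer G x"
    if g: "g \<in> component_stabilizer G x" and h: "h \<in> component_stabilizer G x" for g h
  proof -
    have carr: "g \<in> carrier G" "h \<in> carrier G"
      using g h by (auto simp: mem_component_stabilizer)
    have "(g \<otimes> x \<otimes> inv g, g \<otimes> (h \<otimes> x \<otimes> inv h) \<otimes> inv g) \<in> ?R"
      using killing_graph_rtrancl_conj[OF x carr(1)] h by (simp add: mem_component_stabilizer)
    moreover have "g \<otimes> (h \<otimes> x \<otimes> inv h) \<otimes> inv g = (g \<otimes> h) \<otimes> x \<otimes> inv (g \<otimes> h)"
      using carr x by (simp add: inv_mult_group m_assoc)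
    moreover have "(x, g \<otimes> x \<otimes> inv g) \<in> ?R"
      using g by (simp add: mem_component_stabilizer)
    ultimately show ?thesis
      using carr by (simp add: mem_component_stabilizer)
  qed
  have inv: "inv g \<in> component_stabilizer G x" if g: "g \<in> component_stabilizer G x" for g
  proof -
    have carr: "g \<in> carrier G"
      using g by (simp add: mem_component_stabilizer)
    have "(inv g \<otimes> x \<otimes> inv (inv g), inv g \<otimes> (g \<otimes> x \<otimes> inv g) \<otimes> inv (inv g)) \<in> ?R"
      using killing_graph_rtrancl_conj[OF x inv_closed[OF carr]] g by (simp add: mem_component_stabilizer)
    moreover have "inv g \<otimes> (g \<otimes> x \<otimes> inv g) \<otimes> inv (inv g) = x"
      using carr x by (simp add: m_assoc)
    ultimately have "(inv g \<otimes> x \<otimes> inv (inv g), x) \<in> ?R"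
      by simp
    then have "(x, inv g \<otimes> x \<otimes> inv (inv g)) \<in> ?R"
      using sym_rtrancl[OF sym_killing_graph_edges[OF x]] by (meson symD)
    then show ?thesis
      using carr by (simp add: mem_component_stabilizer)
  qed
  show ?thesis
  proof (rule subgroupI)
    show "component_stabilizer G x \<subseteq> carrier G"
      by (auto simp: mem_component_stabilizer)
    show "component_stabilizer G x \<noteq> {}"
      using self_in_component_stabilizer[OF x] by blast
  qed (fact inv mult)+
qed

lemma killing_irreducible_if_component_stabilizer:
  assumes x: "x \<in> carrier G" and stab: "carrier G \<subseteq> component_stabilizer G x"
  shows "killing_irreducible G (conj_class G x)"
  unfolding killing_irreducible_def
proof (intro ballI)
  let ?R = "(killing_graph_edges G (conj_class G x))\<^sup>*"
  have "(x, a) \<in> ?R" if "a \<in> conj_class G x" for a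
    using that stab unfolding conj_class_def component_stabilizer_def by blast
  moreover have "sym ?R"
    using sym_rtrancl[OF sym_killing_graph_edges[OF x]] .
  ultimately show "(a, b) \<in> ?R" if "a \<in> conj_class G x" "b \<in> conj_class G x" for a b
    using that by (meson rtrancl_trans symD)
qed

lemma component_stabilizerI:
  assumes x: "x \<in> carrier G" and k: "k \<in> carrier G" and c: "c \<in> conj_class G x"
    and comm: "c \<otimes> (x \<otimes> (k \<otimes> x \<otimes> inv k)) = x \<otimes> (k \<otimes> x \<otimes> inv k) \<otimes> c"
  shows "k \<in> component_stabilizer G x"
proof (cases "x = k \<otimes> x \<otimes> inv k")
  case True
  then show ?thesis
    using k unfolding component_stabilizer_def by (simp flip: True)
next
  case False
  have "c \<in> centralizer_elt G (x \<otimes> (k \<otimes> x \<otimes> inv k))"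
    using c comm conj_class_subset_carrier[OF x] unfolding centralizer_elt_def by auto
  then have "(x, k \<otimes> x \<otimes> inv k) \<in> killing_graph_edges G (conj_class G x)"
    using False c self_in_conj_class[OF x] conj_in_conj_class[OF k]
    unfolding killing_graph_edges_def by blast
  then show ?thesis
    using k unfolding component_stabilizer_def by auto
qed

lemma component_stabilizerI_via_centralizer:
  assumes carr: "x \<in> carrier G" "k \<in> carrier G" "u \<in> carrier G" "w \<in> carrier G"
    and wx: "w \<otimes> x = x \<otimes> w"
    and eq: "u \<otimes> x \<otimes> k \<otimes> x = w \<otimes> u \<otimes> k"
  shows "k \<in> component_stabilizer G x"
proof (rule component_stabilizerI)
  (* eq says x (k x k^-1) = u^-1 w u, which commutes with the conjugate u^-1 x u of x *)
  have "x \<otimes> (k \<otimes> x \<otimes> inv k) = inv u \<otimes> (u \<otimes> x \<otimes> k \<otimes> x) \<otimes> inv k"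
    using carr by (simp add: m_assoc)
  also have "\<dots> = inv u \<otimes> w \<otimes> u"
    unfolding eq using carr by (simp add: m_assoc)
  finally have y: "x \<otimes> (k \<otimes> x \<otimes> inv k) = inv u \<otimes> w \<otimes> u" .
  show "inv u \<otimes> x \<otimes> inv (inv u) \<in> conj_class G x"
    using carr by (intro conj_in_conj_class) simp
  show "inv u \<otimes> x \<otimes> inv (inv u) \<otimes> (x \<otimes> (k \<otimes> x \<otimes> inv k))
      = x \<otimes> (k \<otimes> x \<otimes> inv k) \<otimes> (inv u \<otimes> x \<otimes> inv (inv u))"
  proof -
    have "x \<otimes> (w \<otimes> u) = w \<otimes> (x \<otimes> u)"
      using carr wx by (simp flip: m_assoc)
    then show ?thesis
      unfolding y using carr by (simp add: m_assoc)
  qed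
qed (use carr in auto)

end

section \<open>Cycles in symmetric and alternating groups\<close>

lemma evenperm_conj:
  assumes "permutation \<sigma>" "permutation g"
  shows "evenperm (\<sigma> \<circ> g \<circ> inv' \<sigma>) = evenperm g"
  using assms by (simp add: evenperm_comp permutation_compose evenperm_inv permutation_inverse) blast

lemma cycle_of_list2_apply:
  "distinct [a, b] \<Longrightarrow> cycle_of_list [a, b] z = (if z = a then b else if z = b then a else z)"
  by (auto simp: transpose_def)

lemma cycle_of_list3_apply:
  "distinct [a, b, c] \<Longrightarrow>
    cycle_of_list [a, b, c] z = (if z = a then b else if z = b then c else if z = c then a else z)"
  by (auto simp: transpose_def)

lemma cycle_of_list4_apply:
  "distinct [a, b, c, d] \<Longrightarrow> cycle_of_list [a, b, c, d] z =
    (if z = a then b else if z = b then c else if z = c then d else if z = d then a else z)"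
  by (auto simp: transpose_def)

lemmas cycle_of_list_apply = cycle_of_list2_apply cycle_of_list3_apply cycle_of_list4_apply

declare cycle_of_list.simps [simp del]

lemma evenperm_cycle_of_list:
  "distinct cs \<Longrightarrow> cs \<noteq> [] \<Longrightarrow> evenperm (cycle_of_list cs) \<longleftrightarrow> odd (length cs)"
proof (induction cs rule: cycle_of_list.induct)
  case (1 i j cs)
  have "evenperm (cycle_of_list (i # j # cs)) \<longleftrightarrow> evenperm (transpose i j) = evenperm (cycle_of_list (j # cs))"
    by (simp add: cycle_of_list.simps evenperm_comp permutation_of_cycle permutation_swap_id)
  also have "\<dots> \<longleftrightarrow> \<not> evenperm (cycle_of_list (j # cs))"
    using "1.prems"(1) by (simp add: evenperm_swap)
  finally show ?case
    using "1" by simp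
qed (auto simp: cycle_of_list.simps)

lemma cycle_of_list_permutes: "set cs \<subseteq> S \<Longrightarrow> cycle_of_list cs permutes S"
  using cycle_permutes permutes_subset by blast

lemma cycle_of_list_in_alt_group:
  assumes "distinct cs" "odd (length cs)" "set cs \<subseteq> {1..n}"
  shows "cycle_of_list cs \<in> carrier (alt_group n)"
proof -
  have "cs \<noteq> []"
    using assms(2) by auto
  then show ?thesis
    using assms by (simp add: alt_group_carrier evenperm_cycle_of_list cycle_of_list_permutes)
qed

lemma cycle_of_list_comp_in_alt_group:
  assumes "distinct cs" "distinct ds" "cs \<noteq> []" "ds \<noteq> []" "set cs \<union> set ds \<subseteq> {1..n}"
    and "even (length cs + length ds)"
  shows "cycle_of_list cs \<circ> cycle_of_list ds \<in> carrier (alt_group n)"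
  using assms
  by (auto simp: alt_group_carrier evenperm_comp evenperm_cycle_of_list permutation_of_cycle
      intro!: permutes_compose cycle_of_list_permutes)

lemma cycle_of_list3_square:
  assumes "distinct [a, b, c]"
  shows "cycle_of_list [a, b, c] \<circ> cycle_of_list [a, b, c] = cycle_of_list [a, c, b]"
proof
  fix z
  consider "z = a" | "z = b" | "z = c" | "z \<notin> {a, b, c}"
    by blast
  then show "(cycle_of_list [a, b, c] \<circ> cycle_of_list [a, b, c]) z = cycle_of_list [a, c, b] z"
    using assms by cases (auto simp: cycle_of_list3_apply)
qed

lemma cycle_of_list3_comp_shared_pair:
  assumes "distinct [a, b, x, y]"
  shows "cycle_of_list [a, b, y] \<circ> cycle_of_list [a, x, b] = cycle_of_list [a, x, y]"
proof
  fix z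
  consider "z = a" | "z = b" | "z = x" | "z = y" | "z \<notin> {a, b, x, y}"
    by blast
  then show "(cycle_of_list [a, b, y] \<circ> cycle_of_list [a, x, b]) z = cycle_of_list [a, x, y] z"
    using assms by cases (auto simp: cycle_of_list3_apply)
qed

lemma cycle_of_list3_comp_shared_point:
  assumes "distinct [d, a, b, c]"
  shows "cycle_of_list [d, a, b] \<circ> cycle_of_list [d, b, c] = cycle_of_list [a, b, c]"
proof
  fix z
  consider "z = a" | "z = b" | "z = c" | "z = d" | "z \<notin> {a, b, c, d}"
    by blast
  then show "(cycle_of_list [d, a, b] \<circ> cycle_of_list [d, b, c]) z = cycle_of_list [a, b, c] z"
    using assms by cases (auto simp: cycle_of_list3_apply)
qed

lemma cycle_of_list3_rotate: "distinct [a, b, c] \<Longrightarrow> cycle_of_list [a, b, c] = cycle_of_list [b, c, a]"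
  using cycle_of_list_rotate_independent[of "[a, b, c]" 1] by simp

context
  fixes n :: nat and G :: "(nat \<Rightarrow> nat) monoid"
  assumes sym_or_alt: "G = sym_group n \<or> G = alt_group n"
begin

lemma sym_or_alt_is_group: "group G"
  using sym_or_alt sym_group_is_group alt_group_is_group by blast

lemma sym_or_alt_mult: "g \<otimes>\<^bsub>G\<^esub> h = g \<circ> h"
  using sym_or_alt sym_group_mult alt_group_mult by metis

lemma sym_or_alt_one: "\<one>\<^bsub>G\<^esub> = id"
  using sym_or_alt sym_group_one alt_group_one by metis

lemma sym_or_alt_pow: "g [^]\<^bsub>G\<^esub> (k::nat) = g ^^ k"
proof -
  have "g [^]\<^bsub>sym_group n\<^esub> k = g ^^ k" "g [^]\<^bsub>alt_group n\<^esub> k = g ^^ k"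
    by (induction k) (simp_all add: alt_group_def sym_group_def funpow_Suc_right del: funpow.simps(2))
  then show ?thesis
    using sym_or_alt by (elim disjE) simp_all
qed

lemma sym_or_alt_permutes: "g \<in> carrier G \<Longrightarrow> g permutes {1..n}"
  using sym_or_alt by (elim disjE) (simp_all add: sym_group_carrier alt_group_carrier)

lemma alt_group_subset_carrier: "carrier (alt_group n) \<subseteq> carrier G"
  using sym_or_alt by (elim disjE) (auto simp add: sym_group_carrier alt_group_carrier)

lemma sym_or_alt_subgroup_sym_group: 
  assumes "subgroup H G" shows "subgroup H (sym_group n)"
  using sym_or_alt
proof (elim disjE)
  assume "G = alt_group n"
  then show ?thesis
    using assms group.incl_subgroup[OF sym_group_is_group alt_group_is_subgroup]
    unfolding alt_group_def by simp
qed (use assms in simp)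

lemma sym_or_alt_conj_closed:
  assumes \<sigma>: "\<sigma> permutes {1..n}" and g: "g \<in> carrier G"
  shows "\<sigma> \<circ> g \<circ> inv' \<sigma> \<in> carrier G"
proof -
  have g_perm: "g permutes {1..n}"
    using g by (rule sym_or_alt_permutes)
  then have "\<sigma> \<circ> g \<circ> inv' \<sigma> permutes {1..n}"
    using \<sigma> by (intro permutes_compose permutes_inv)
  moreover have "evenperm (\<sigma> \<circ> g \<circ> inv' \<sigma>) = evenperm g"
    using \<sigma> g_perm by (intro evenperm_conj permutes_imp_permutation[OF finite_atLeastAtMost])
  ultimately show ?thesis
    using sym_or_alt g by (elim disjE) (simp_all add: sym_group_carrier alt_group_carrier)
qed

lemma sym_or_alt_conj_iso:
  assumes \<sigma>: "\<sigma> permutes {1..n}"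
  shows "(\<lambda>g. \<sigma> \<circ> g \<circ> inv' \<sigma>) \<in> iso G G"
proof -
  have inv_o: "\<sigma> \<circ> inv' \<sigma> = id" "inv' \<sigma> \<circ> \<sigma> = id"
    using permutes_inv_o[OF \<sigma>] by auto
  have cancel: "inv' \<sigma> \<circ> (\<sigma> \<circ> f) = f" "\<sigma> \<circ> (inv' \<sigma> \<circ> f) = f" for f :: "nat \<Rightarrow> nat"
    using inv_o by (simp_all add: o_assoc)
  have "(\<lambda>g. \<sigma> \<circ> g \<circ> inv' \<sigma>) \<in> hom G G"
  proof (rule homI)
    fix g h
    show "\<sigma> \<circ> (g \<otimes>\<^bsub>G\<^esub> h) \<circ> inv' \<sigma> = (\<sigma> \<circ> g \<circ> inv' \<sigma>) \<otimes>\<^bsub>G\<^esub> (\<sigma> \<circ> h \<circ> inv' \<sigma>)"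
      by (simp add: sym_or_alt_mult comp_assoc cancel)
  qed (rule sym_or_alt_conj_closed[OF \<sigma>])
  moreover have "bij_betw (\<lambda>g. \<sigma> \<circ> g \<circ> inv' \<sigma>) (carrier G) (carrier G)"
  proof (rule bij_betw_byWitness[where f' = "\<lambda>g. inv' \<sigma> \<circ> g \<circ> \<sigma>"])
    show "\<forall>g \<in> carrier G. inv' \<sigma> \<circ> (\<sigma> \<circ> g \<circ> inv' \<sigma>) \<circ> \<sigma> = g"
      "\<forall>g \<in> carrier G. \<sigma> \<circ> (inv' \<sigma> \<circ> g \<circ> \<sigma>) \<circ> inv' \<sigma> = g"
      by (simp_all add: comp_assoc cancel inv_o)
    show "(\<lambda>g. \<sigma> \<circ> g \<circ> inv' \<sigma>) ` carrier G \<subseteq> carrier G"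
      using sym_or_alt_conj_closed[OF \<sigma>] by blast
    show "(\<lambda>g. inv' \<sigma> \<circ> g \<circ> \<sigma>) ` carrier G \<subseteq> carrier G"
      using sym_or_alt_conj_closed[OF permutes_inv[OF \<sigma>]] permutes_inv_inv[OF \<sigma>] by auto
  qed
  ultimately show ?thesis
    unfolding iso_def by blast
qed

lemma sym_or_alt_component_stabilizerI:
  assumes carr: "s \<in> carrier G" "k \<in> carrier G" "u \<in> carrier G"
    and eq: "u \<circ> s \<circ> k \<circ> s = (s ^^ j) \<circ> u \<circ> k"
  shows "k \<in> component_stabilizer G s"
proof -
  interpret group G
    by (rule sym_or_alt_is_group)
  have "s ^^ j \<in> carrier G"
    using carr(1) sym_or_alt_pow[of s j] by (metis nat_pow_closed)
  moreover have "(s ^^ j) \<circ> s = s \<circ> (s ^^ j)"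
    by (metis funpow_Suc_right funpow.simps(2))
  ultimately show ?thesis
    using component_stabilizerI_via_centralizer[OF carr, of "s ^^ j"] eq by (simp add: sym_or_alt_mult)
qed

end

section \<open>The standard n-cycle\<close>

definition std_cycle :: "nat \<Rightarrow> nat \<Rightarrow> nat" where
  "std_cycle n i = (if 1 \<le> i \<and> i < n then Suc i else if i = n \<and> 1 \<le> n then 1 else i)"

lemma std_cycle_permutes: "std_cycle n permutes {1..n}"
proof -
  have "inj_on (std_cycle n) {1..n}"
    unfolding inj_on_def std_cycle_def by auto
  moreover have "std_cycle n ` {1..n} \<subseteq> {1..n}"
    unfolding std_cycle_def by auto
  ultimately have "bij_betw (std_cycle n) {1..n} {1..n}"
    by (simp add: bij_betw_def endo_inj_surj)
  then show ?thesis
    by (rule bij_imp_permutes) (auto simp: std_cycle_def)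
qed

definition orbit_enum :: "(nat \<Rightarrow> nat) \<Rightarrow> nat \<Rightarrow> nat \<Rightarrow> nat \<Rightarrow> nat" where
  "orbit_enum x a n i = (if i \<in> {1..n} then (x ^^ (i - 1)) a else i)"

lemma orbit_enum_permutes:
  assumes x: "x permutes {1..n}" and a: "a \<in> {1..n}" and n: "least_power x a = n"
  shows "orbit_enum x a n permutes {1..n}"
proof -
  have "permutation x"
    using x by (intro permutes_imp_permutation[OF finite_atLeastAtMost])
  then have inj: "inj_on (\<lambda>i. (x ^^ i) a) {..<n}"
    using cycle_of_permutation[of x a] n by (simp add: distinct_map atLeast_upt)
  have "inj_on (orbit_enum x a n) {1..n}"
  proof (rule inj_onI)
    fix i j assume ij: "i \<in> {1..n}" "j \<in> {1..n}" "orbit_enum x a n i = orbit_enum x a n j"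
    then have "i - 1 = j - 1"
      using inj_onD[OF inj, of "i - 1" "j - 1"] unfolding orbit_enum_def by auto
    then show "i = j"
      using ij(1,2) by auto
  qed
  moreover have "orbit_enum x a n ` {1..n} \<subseteq> {1..n}"
    unfolding orbit_enum_def using permutes_in_image[OF permutes_funpow[OF x]] a by auto
  ultimately have "bij_betw (orbit_enum x a n) {1..n} {1..n}"
    by (simp add: bij_betw_def endo_inj_surj)
  then show ?thesis
    by (rule bij_imp_permutes) (auto simp: orbit_enum_def)
qed

lemma orbit_enum_std_cycle:
  assumes x: "x permutes {1..n}" and a: "(x ^^ n) a = a"
  shows "x \<circ> orbit_enum x a n = orbit_enum x a n \<circ> std_cycle n"
proof
  fix i
  consider "i \<notin> {1..n}" | "1 \<le> i" "i < n" | "i = n" "1 \<le> n"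
    by fastforce
  then show "(x \<circ> orbit_enum x a n) i = (orbit_enum x a n \<circ> std_cycle n) i"
  proof cases
    case 1
    then show ?thesis
      using x unfolding orbit_enum_def std_cycle_def by (auto simp: permutes_not_in)
  next
    case 2
    then have "x ((x ^^ (i - 1)) a) = (x ^^ i) a"
      by (metis Suc_diff_1 funpow.simps(2) less_le_trans o_apply zero_less_one)
    then show ?thesis
      using 2 unfolding orbit_enum_def std_cycle_def by auto
  next
    case 3
    then have "x ((x ^^ (n - 1)) a) = a"
      using a by (metis Suc_diff_1 funpow.simps(2) o_apply le_eq_less_or_eq zero_less_one less_le_trans)
    then show ?thesis
      using 3 unfolding orbit_enum_def std_cycle_def by auto
  qed
qed

lemma least_power_prime:
  assumes "prime p" "permutation x" "x ^^ p = id" "x a \<noteq> a"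
  shows "least_power x a = p"
proof -
  have "least_power x a dvd p"
    using least_power_dvd[OF assms(2)] assms(3) by simp
  moreover have "least_power x a \<noteq> 1"
    using least_power_gt_one[OF assms(2,4)] by simp
  ultimately show ?thesis
    using assms(1) unfolding prime_nat_iff by blast
qed

lemma prime_order_perm_conj_std_cycle:
  assumes p: "prime p" and x: "x permutes {1..p}" and xp: "x ^^ p = id" and "x \<noteq> id"
  obtains \<sigma> where "\<sigma> permutes {1..p}" "x = \<sigma> \<circ> std_cycle p \<circ> inv' \<sigma>"
proof -
  obtain a where a: "x a \<noteq> a"
    using \<open>x \<noteq> id\<close> by (auto simp: fun_eq_iff)
  then have "a \<in> {1..p}"
    using x by (meson permutes_not_in)
  moreover have "least_power x a = p"
    using least_power_prime[OF p permutes_imp_permutation[OF finite_atLeastAtMost x] xp a] .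
  ultimately have \<sigma>: "orbit_enum x a p permutes {1..p}"
    using orbit_enum_permutes[OF x] by blast
  have "x \<circ> orbit_enum x a p = orbit_enum x a p \<circ> std_cycle p"
    using orbit_enum_std_cycle[OF x] xp by simp
  then have "x = orbit_enum x a p \<circ> std_cycle p \<circ> inv' (orbit_enum x a p)"
    by (metis \<sigma> comp_assoc comp_id permutes_inv_o(1))
  then show ?thesis
    using \<sigma> that by blast
qed

section \<open>Subgroups of S_n containing the consecutive 3-cycles\<close>

context
  fixes n :: nat and H :: "(nat \<Rightarrow> nat) set"
  assumes H: "subgroup H (sym_group n)"
begin

lemma sym_subgroup_comp_closed: "g \<in> H \<Longrightarrow> h \<in> H \<Longrightarrow> g \<circ> h \<in> H"
  using subgroup.m_closed[OF H] by (simp add: sym_group_mult)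

lemma sym_subgroup_inv_closed: "h \<in> H \<Longrightarrow> inv' h \<in> H"
  using subgroup.m_inv_closed[OF H] subgroup.mem_carrier[OF H] by simp

lemma sym_subgroup_conj_cycle_closed:
  assumes "h \<in> H" "distinct cs" "cycle_of_list cs \<in> H"
  shows "cycle_of_list (map h cs) \<in> H"
proof -
  have "bij h"
    using subgroup.mem_carrier[OF H assms(1)] by (simp add: sym_group_carrier permutes_bij)
  then have "cycle_of_list (map h cs) = h \<circ> cycle_of_list cs \<circ> inv' h"
    using conjugation_of_cycle[OF assms(2)] by metis
  then show ?thesis
    using assms(1,3) by (simp add: sym_subgroup_comp_closed sym_subgroup_inv_closed)
qed

lemma sym_subgroup_sym_group_subset:
  assumes alt: "carrier (alt_group n) \<subseteq> H" and k: "k \<in> H" "\<not> evenperm k"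
  shows "carrier (sym_group n) \<subseteq> H"
proof
  fix g assume g: "g \<in> carrier (sym_group n)"
  have k_perm: "k permutes {1..n}"
    using subgroup.mem_carrier[OF H k(1)] by (simp add: sym_group_carrier)
  have g_perm: "g permutes {1..n}"
    using g by (simp add: sym_group_carrier)
  show "g \<in> H"
  proof (cases "evenperm g")
    case True
    then show ?thesis
      using alt g_perm by (auto simp: alt_group_carrier)
  next
    case False
    have perms: "permutation k" "permutation g"
      using k_perm g_perm by (auto intro: permutes_imp_permutation)
    have "inv' k \<circ> g permutes {1..n}"
      using g_perm permutes_inv[OF k_perm] by (rule permutes_compose)
    moreover have "evenperm (inv' k \<circ> g)"
      using False k(2) perms by (simp add: evenperm_comp evenperm_inv permutation_inverse)
    ultimately have "inv' k \<circ> g \<in> H"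
      using alt by (auto simp: alt_group_carrier)
    then have "k \<circ> (inv' k \<circ> g) \<in> H"
      using sym_subgroup_comp_closed[OF k(1)] by blast
    then show ?thesis
      using permutes_inv_o(1)[OF k_perm] by (simp add: o_assoc)
  qed
qed

lemma consecutive_three_cycle_shift_in_subgroup:
  assumes s: "std_cycle n \<in> H" and m: "1 \<le> m" "m + 3 \<le> n"
  shows "cycle_of_list [m, m + 1, m + 2] \<in> H \<longleftrightarrow> cycle_of_list [Suc m, Suc m + 1, Suc m + 2] \<in> H"
proof
  have "std_cycle n i = Suc i" if "1 \<le> i" "i < n" for i
    using that by (simp add: std_cycle_def)
  then have shift: "map (std_cycle n) [m, m + 1, m + 2] = [Suc m, Suc m + 1, Suc m + 2]"
    using m by simp
  show "cycle_of_list [Suc m, Suc m + 1, Suc m + 2] \<in> H" if "cycle_of_list [m, m + 1, m + 2] \<in> H"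
    using sym_subgroup_conj_cycle_closed[OF s _ that] shift by simp
  have "map (inv' (std_cycle n)) [Suc m, Suc m + 1, Suc m + 2] = [m, m + 1, m + 2]"
    unfolding shift[symmetric] using permutes_inverses(2)[OF std_cycle_permutes] by simp
  then show "cycle_of_list [m, m + 1, m + 2] \<in> H" if "cycle_of_list [Suc m, Suc m + 1, Suc m + 2] \<in> H"
    using sym_subgroup_conj_cycle_closed[OF sym_subgroup_inv_closed[OF s] _ that] by simp
qed

lemma consecutive_three_cycles_in_subgroup:
  assumes s: "std_cycle n \<in> H"
    and j: "1 \<le> j" "j + 2 \<le> n" "cycle_of_list [j, j + 1, j + 2] \<in> H"
    and i: "1 \<le> i" "i + 2 \<le> n"
  shows "cycle_of_list [i, i + 1, i + 2] \<in> H"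
proof -
  have below: "cycle_of_list [m, m + 1, m + 2] \<in> H" if m: "1 \<le> m" "m \<le> j" for m
    using m(2)
  proof (induction rule: inc_induct)
    case (step k)
    then show ?case
      using consecutive_three_cycle_shift_in_subgroup[OF s, of k] m(1) j(2) by simp
  qed (rule j(3))
  show ?thesis
    using i(1)
  proof (induction rule: dec_induct)
    case base
    then show ?case
      using below[of 1] j(1) by simp
  next
    case (step k)
    then show ?case
      using consecutive_three_cycle_shift_in_subgroup[OF s, of k] i(2) by simp
  qed
qed

(* The results below also hold for n = 4, but the step from (1 2 3) to (1 2 4) conjugates by (3 4 5). *)
context
  assumes n: "n \<noteq> 4"
    and consecutive: "\<And>i. 1 \<le> i \<Longrightarrow> i + 2 \<le> n \<Longrightarrow> cycle_of_list [i, i + 1, i + 2] \<in> H"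
begin

lemma three_cycle_1_2_in_subgroup:
  assumes "3 \<le> k" "k \<le> n"
  shows "cycle_of_list [1, 2, k] \<in> H"
  using assms
proof (induction k rule: nat_induct_at_least)
  case base
  then show ?case
    using consecutive[of 1] by (simp add: numeral_eq_Suc)
next
  case (Suc k)
  have IH: "cycle_of_list [1, 2, k] \<in> H"
    using Suc.IH Suc.prems by simp
  show ?case
  proof (cases "k = 3")
    case True
    then have "5 \<le> n"
      using Suc n by simp
    have "map (cycle_of_list [3, 4, 5]) [1, 2, k] = [1, 2, Suc k]"
      using True by (simp add: cycle_of_list3_apply)
    then show ?thesis
      using sym_subgroup_conj_cycle_closed[OF consecutive[of 3] _ IH] \<open>5 \<le> n\<close> True by simp
  next
    case False
    define m where "m = k - 1"
    have k: "k = Suc m" "3 \<le> m"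
      using False Suc.hyps unfolding m_def by auto
    have "distinct [m, m + 1, m + 2]"
      by simp
    then have "map (cycle_of_list [m, m + 1, m + 2]) [1, 2, k] = [1, 2, Suc k]"
      using k by (simp add: cycle_of_list3_apply)
    then show ?thesis
      using sym_subgroup_conj_cycle_closed[OF consecutive[of m] _ IH] k Suc.prems by simp
  qed
qed

lemma three_cycle_1_in_subgroup:
  assumes xy: "distinct [1, x, y]" "x \<in> {1..n}" "y \<in> {1..n}"
  shows "cycle_of_list [1, x, y] \<in> H"
proof -
  have cycle_1_2: "cycle_of_list [1, z, 2] \<in> H" if "distinct [1, z, 2]" "z \<in> {1..n}" for z
  proof -
    have "cycle_of_list [1, z, 2] = cycle_of_list [1, 2, z] \<circ> cycle_of_list [1, 2, z]"
      using cycle_of_list3_square[of 1 2 z] that(1) by auto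
    moreover have "cycle_of_list [1, 2, z] \<in> H"
      using three_cycle_1_2_in_subgroup that by simp
    ultimately show ?thesis
      using sym_subgroup_comp_closed by simp
  qed
  consider "x = 2" | "y = 2" | "x \<noteq> 2" "y \<noteq> 2"
    by blast
  then show ?thesis
  proof cases
    case 1
    then show ?thesis
      using three_cycle_1_2_in_subgroup[of y] xy by simp
  next
    case 2
    then show ?thesis
      using cycle_1_2[of x] xy by simp
  next
    case 3
    have "cycle_of_list [1, x, y] = cycle_of_list [1, 2, y] \<circ> cycle_of_list [1, x, 2]"
      using cycle_of_list3_comp_shared_pair[of 1 2 x y] xy 3 by simp
    moreover have "cycle_of_list [1, 2, y] \<in> H"
      using three_cycle_1_2_in_subgroup[of y] xy 3 by simp
    ultimately show ?thesis
      using cycle_1_2[of x] xy 3 sym_subgroup_comp_closed by simp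
  qed
qed

lemma three_cycle_in_subgroup:
  assumes abc: "distinct [a, b, c]" "{a, b, c} \<subseteq> {1..n}"
  shows "cycle_of_list [a, b, c] \<in> H"
proof -
  consider "a = 1" | "b = 1" | "c = 1" | "1 \<notin> {a, b, c}"
    by blast
  then show ?thesis
  proof cases
    case 1
    then show ?thesis
      using three_cycle_1_in_subgroup[of b c] abc by simp
  next
    case 2
    then show ?thesis
      using three_cycle_1_in_subgroup[of c a] abc cycle_of_list3_rotate[of a b c] by simp
  next
    case 3
    then show ?thesis
      using three_cycle_1_in_subgroup[of a b] abc cycle_of_list3_rotate[of c a b] by simp
  next
    case 4
    then have "cycle_of_list [a, b, c] = cycle_of_list [1, a, b] \<circ> cycle_of_list [1, b, c]"
      using cycle_of_list3_comp_shared_point[of 1 a b c] abc by simp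
    then show ?thesis
      using three_cycle_1_in_subgroup[of a b] three_cycle_1_in_subgroup[of b c]
        abc 4 sym_subgroup_comp_closed by simp
  qed
qed

lemma alt_group_subset_subgroup: "carrier (alt_group n) \<subseteq> H"
proof -
  have "three_cycles n \<subseteq> H"
  proof
    fix c assume "c \<in> three_cycles n"
    then obtain cs where cs: "c = cycle_of_list cs" "distinct cs" "length cs = 3" "set cs \<subseteq> {1..n}"
      by blast
    then show "c \<in> H"
      using three_cycle_in_subgroup[of "cs ! 0" "cs ! 1" "cs ! 2"] stupid_lemma[OF cs(3)]
      by (metis list.set(1,2))
  qed
  then have "generate (sym_group n) (three_cycles n) \<subseteq> H"
    using group.generate_subgroup_incl[OF sym_group_is_group _ H] by blast
  moreover have "generate (alt_group n) (three_cycles n) = generate (sym_group n) (three_cycles n)"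
    using group.generate_consistent[OF sym_group_is_group three_cycles_incl alt_group_is_subgroup]
    by (simp add: alt_group_def)
  ultimately show ?thesis
    using alt_group_carrier_as_three_cycles by blast
qed

end

end

section \<open>The component stabiliser of the standard p-cycle\<close>

(* Used for identities between compositions of std_cycle p with permutations of {1..8}: away from
   0..8, p - 1 and p such a composition acts as a fixed power of the shift, so one generic point
   of each remaining range suffices. *)
lemma nat_fun_eq_window:
  fixes f g :: "nat \<Rightarrow> nat"
  assumes "f 0 = g 0" "f 1 = g 1" "f 2 = g 2" "f 3 = g 3" "f 4 = g 4" "f 5 = g 5" "f 6 = g 6"
    "f 7 = g 7" "f 8 = g 8" "\<And>q. p = Suc q \<Longrightarrow> f q = g q" "f p = g p"
    "\<And>z. 8 < z \<Longrightarrow> Suc z < p \<Longrightarrow> f z = g z" "\<And>z. p < z \<Longrightarrow> 8 < z \<Longrightarrow> f z = g z"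
  shows "f = g"
proof
  fix z
  consider "z \<le> 8" | "8 < z \<and> Suc z < p" | "p = Suc z" | "z = p" | "p < z \<and> 8 < z"
    by linarith
  then show "f z = g z"
  proof cases
    case 1
    then have "z = 0 \<or> z = 1 \<or> z = 2 \<or> z = 3 \<or> z = 4 \<or> z = 5 \<or> z = 6 \<or> z = 7 \<or> z = 8"
      by linarith
    then show ?thesis
      using assms(1-9) by (elim disjE) simp_all
  qed (use assms in auto)
qed

lemma std_cycle_2: "std_cycle 2 = cycle_of_list [1, 2]"
  by (rule nat_fun_eq_window[where p = 2]; simp add: std_cycle_def cycle_of_list_apply)

lemma std_cycle_3: "std_cycle 3 = cycle_of_list [1, 2, 3]"
  by (rule nat_fun_eq_window[where p = 3]; simp add: std_cycle_def cycle_of_list_apply)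

lemma small_prime_cases: "prime (p::nat) \<Longrightarrow> p = 2 \<or> p = 3 \<or> p = 5 \<or> p = 7 \<or> 9 \<le> p"
proof -
  assume p: "prime p"
  have "\<not> prime (4::nat)" "\<not> prime (6::nat)" "\<not> prime (8::nat)"
    using prime_product[of "2::nat" 2] prime_product[of "2::nat" 3] prime_product[of "2::nat" 4] by auto
  then have "p \<noteq> 4" "p \<noteq> 6" "p \<noteq> 8"
    using p by auto
  then show ?thesis
    using prime_ge_2_nat[OF p] by linarith
qed

context
  fixes p :: nat and G :: "(nat \<Rightarrow> nat) monoid"
  assumes sym_or_alt: "G = sym_group p \<or> G = alt_group p"
    and s: "std_cycle p \<in> carrier G"
begin

(* The witnesses u and k for sym_or_alt_component_stabilizerI below were found by computer search. *)
lemma three_cycle_567_in_component_stabilizer: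
  assumes "p = 7 \<or> 9 \<le> p"
  shows "cycle_of_list [5, 6, 7] \<in> component_stabilizer G (std_cycle p)"
proof -
  define k\<^sub>1 :: "nat \<Rightarrow> nat" where "k\<^sub>1 = cycle_of_list [4, 6, 1] \<circ> cycle_of_list [5, 7, 2]"
  define k\<^sub>2 :: "nat \<Rightarrow> nat" where "k\<^sub>2 = cycle_of_list [4, 1, 6, 5] \<circ> cycle_of_list [7, 2]"
  define u\<^sub>1 :: "nat \<Rightarrow> nat" where "u\<^sub>1 = cycle_of_list [2, 7, 5]"
  define u\<^sub>2 :: "nat \<Rightarrow> nat" where "u\<^sub>2 = cycle_of_list [2, 7] \<circ> cycle_of_list [3, 5]"
  have "7 \<le> p"
    using assms by auto
  then have carr: "k\<^sub>1 \<in> carrier G" "k\<^sub>2 \<in> carrier G" "u\<^sub>1 \<in> carrier G" "u\<^sub>2 \<in> carrier G"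
    unfolding k\<^sub>1_def k\<^sub>2_def u\<^sub>1_def u\<^sub>2_def
    by (auto intro!: subsetD[OF alt_group_subset_carrier[OF sym_or_alt]]
        cycle_of_list_comp_in_alt_group cycle_of_list_in_alt_group)
  have "p = 7 \<or> 9 \<le> p \<Longrightarrow>
      u\<^sub>1 \<circ> std_cycle p \<circ> k\<^sub>1 \<circ> std_cycle p = (std_cycle p ^^ 2) \<circ> u\<^sub>1 \<circ> k\<^sub>1"
    unfolding k\<^sub>1_def u\<^sub>1_def
    by (elim disjE; rule nat_fun_eq_window[where p = p]; simp add: std_cycle_def cycle_of_list_apply numeral_2_eq_2)
  then have "k\<^sub>1 \<in> component_stabilizer G (std_cycle p)"
    using sym_or_alt_component_stabilizerI[OF sym_or_alt s carr(1,3)] assms by blast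
  moreover have "p = 7 \<or> 9 \<le> p \<Longrightarrow>
      u\<^sub>2 \<circ> std_cycle p \<circ> k\<^sub>2 \<circ> std_cycle p = (std_cycle p ^^ 2) \<circ> u\<^sub>2 \<circ> k\<^sub>2"
    unfolding k\<^sub>2_def u\<^sub>2_def
    by (elim disjE; rule nat_fun_eq_window[where p = p]; simp add: std_cycle_def cycle_of_list_apply numeral_2_eq_2)
  then have "k\<^sub>2 \<in> component_stabilizer G (std_cycle p)"
    using sym_or_alt_component_stabilizerI[OF sym_or_alt s carr(2,4)] assms by blast
  moreover have "k\<^sub>1 \<circ> k\<^sub>2 = cycle_of_list [5, 6, 7]"
    unfolding k\<^sub>1_def k\<^sub>2_def by (auto simp: fun_eq_iff cycle_of_list_apply)
  ultimately show ?thesis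
    using subgroup.m_closed[OF group.component_stabilizer_subgroup[OF sym_or_alt_is_group[OF sym_or_alt] s]]
    by (metis sym_or_alt_mult[OF sym_or_alt])
qed

lemma three_cycle_345_in_component_stabilizer:
  assumes "p = 5"
  shows "cycle_of_list [3, 4, 5] \<in> component_stabilizer G (std_cycle p)"
proof -
  define u :: "nat \<Rightarrow> nat" where "u = cycle_of_list [2, 3] \<circ> cycle_of_list [4, 5]"
  have "cycle_of_list [3, 4, 5] \<in> carrier G" "u \<in> carrier G"
    unfolding u_def using assms
    by (auto intro!: subsetD[OF alt_group_subset_carrier[OF sym_or_alt]]
        cycle_of_list_comp_in_alt_group cycle_of_list_in_alt_group)
  moreover have "u \<circ> std_cycle 5 \<circ> cycle_of_list [3, 4, 5] \<circ> std_cycle 5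
      = (std_cycle 5 ^^ 1) \<circ> u \<circ> cycle_of_list [3, 4, 5]"
    unfolding u_def by (rule nat_fun_eq_window[where p = 5]; simp add: std_cycle_def cycle_of_list_apply)
  ultimately show ?thesis
    using sym_or_alt_component_stabilizerI[OF sym_or_alt s] assms by blast
qed

lemma consecutive_three_cycle_in_component_stabilizer:
  assumes "prime p" "3 \<le> p"
  obtains j where "1 \<le> j" "j + 2 \<le> p" "cycle_of_list [j, j + 1, j + 2] \<in> component_stabilizer G (std_cycle p)"
proof -
  consider "p = 3" | "p = 5" | "p = 7 \<or> 9 \<le> p"
    using small_prime_cases[OF assms(1)] assms(2) by force
  then show ?thesis
  proof cases
    case 1
    have "cycle_of_list [1, 2, 3] \<in> component_stabilizer G (std_cycle p)"
      using group.self_in_component_stabilizer[OF sym_or_alt_is_group[OF sym_or_alt] s] 1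
      by (simp add: std_cycle_3)
    then show ?thesis
      using that[of 1] 1 by (simp add: numeral_eq_Suc)
  next
    case 2
    then show ?thesis
      using that[of 3] three_cycle_345_in_component_stabilizer by simp
  next
    case 3
    then show ?thesis
      using that[of 5] three_cycle_567_in_component_stabilizer by auto
  qed
qed

lemma transposition_in_component_stabilizer:
  assumes "p = 3" "G = sym_group p"
  shows "cycle_of_list [1, 2] \<in> component_stabilizer G (std_cycle p)"
proof -
  have "cycle_of_list [1, 2] permutes {1..p}"
    using assms(1) by (intro cycle_of_list_permutes) auto
  then have "cycle_of_list [1, 2] \<in> carrier G" "id \<in> carrier G"
    using assms(2) by (simp_all add: sym_group_carrier permutes_id)
  moreover have "id \<circ> std_cycle 3 \<circ> cycle_of_list [1, 2] \<circ> std_cycle 3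
      = (std_cycle 3 ^^ 0) \<circ> id \<circ> cycle_of_list [1, 2]"
    by (rule nat_fun_eq_window[where p = 3]; simp add: std_cycle_def cycle_of_list_apply)
  ultimately show ?thesis
    using sym_or_alt_component_stabilizerI[OF sym_or_alt s] assms(1) by blast
qed

lemma four_cycle_in_component_stabilizer:
  assumes "p = 5 \<or> p = 7 \<or> 9 \<le> p" "G = sym_group p"
  shows "cycle_of_list [1, 4, 5, 2] \<in> component_stabilizer G (std_cycle p)"
proof -
  define u :: "nat \<Rightarrow> nat" where "u = cycle_of_list [2, 5] \<circ> cycle_of_list [3, 4]"
  have "5 \<le> p"
    using assms(1) by auto
  then have "cycle_of_list [1, 4, 5, 2] permutes {1..p}" "u \<in> carrier (alt_group p)"
    unfolding u_def by (auto intro!: cycle_of_list_permutes cycle_of_list_comp_in_alt_group)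
  then have "cycle_of_list [1, 4, 5, 2] \<in> carrier G" "u \<in> carrier G"
    using assms(2) alt_group_subset_carrier[OF sym_or_alt] by (auto simp: sym_group_carrier)
  moreover have "p = 5 \<or> p = 7 \<or> 9 \<le> p \<Longrightarrow>
      u \<circ> std_cycle p \<circ> cycle_of_list [1, 4, 5, 2] \<circ> std_cycle p
        = (std_cycle p ^^ 2) \<circ> u \<circ> cycle_of_list [1, 4, 5, 2]"
    unfolding u_def
    by (elim disjE; rule nat_fun_eq_window[where p = p]; simp add: std_cycle_def cycle_of_list_apply numeral_2_eq_2)
  ultimately show ?thesis
    using sym_or_alt_component_stabilizerI[OF sym_or_alt s] assms(1) by blast
qed

lemma odd_perm_in_component_stabilizer:
  assumes "prime p" "G = sym_group p"
  obtains k where "k \<in> component_stabilizer G (std_cycle p)" "\<not> evenperm k"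
proof -
  have odd: "\<not> evenperm (cycle_of_list [1, 2 :: nat])" "\<not> evenperm (cycle_of_list [1, 4, 5, 2 :: nat])"
    by (simp_all add: evenperm_cycle_of_list)
  consider "p = 2" | "p = 3" | "p = 5 \<or> p = 7 \<or> 9 \<le> p"
    using small_prime_cases[OF assms(1)] by blast
  then show ?thesis
  proof cases
    case 1
    then show ?thesis
      using that[of "std_cycle p"] group.self_in_component_stabilizer[OF sym_or_alt_is_group[OF sym_or_alt] s]
        odd(1) by (simp add: std_cycle_2)
  next
    case 2
    then show ?thesis
      using that transposition_in_component_stabilizer[OF _ assms(2)] odd(1) by blast
  next
    case 3
    then show ?thesis
      using that four_cycle_in_component_stabilizer[OF _ assms(2)] odd(2) by blast
  qed
qed

lemma killing_irreducible_std_cycle: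
  assumes p: "prime p"
  shows "killing_irreducible G (conj_class G (std_cycle p))"
proof -
  interpret group G
    by (rule sym_or_alt_is_group[OF sym_or_alt])
  let ?H = "component_stabilizer G (std_cycle p)"
  have H: "subgroup ?H (sym_group p)"
    using sym_or_alt_subgroup_sym_group[OF sym_or_alt component_stabilizer_subgroup[OF s]] .
  have consecutive: "cycle_of_list [i, i + 1, i + 2] \<in> ?H" if "1 \<le> i" "i + 2 \<le> p" for i
  proof -
    have "3 \<le> p"
      using that by simp
    then obtain j where "1 \<le> j" "j + 2 \<le> p" "cycle_of_list [j, j + 1, j + 2] \<in> ?H"
      by (rule consecutive_three_cycle_in_component_stabilizer[OF p])
    then show ?thesis
      using consecutive_three_cycles_in_subgroup[OF H self_in_component_stabilizer[OF s]] that by blast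
  qed
  have "p \<noteq> 4"
    using small_prime_cases[OF p] by auto
  then have alt: "carrier (alt_group p) \<subseteq> ?H"
    using alt_group_subset_subgroup[OF H _ consecutive] by blast
  have "carrier G \<subseteq> ?H"
    using sym_or_alt
  proof (elim disjE)
    assume G: "G = sym_group p"
    obtain k where "k \<in> ?H" "\<not> evenperm k"
      using odd_perm_in_component_stabilizer[OF p G] .
    then show ?thesis
      using sym_subgroup_sym_group_subset[OF H alt] G by blast
  qed (use alt in simp)
  then show ?thesis
    by (rule killing_irreducible_if_component_stabilizer[OF s])
qed

end

theorem lemma7p5:
  fixes p :: nat and G :: "(nat \<Rightarrow> nat) monoid" and x :: "nat \<Rightarrow> nat"
  assumes "prime p"
    and "G = sym_group p \<or> G = alt_group p"
    and "x \<in> carrier G"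
    and "group.ord G x = p"
  shows "killing_irreducible G (conj_class G x)"
proof -
  note p = assms(1) and sym_or_alt = assms(2) and x = assms(3)
  interpret group G
    by (rule sym_or_alt_is_group[OF sym_or_alt])
  have "x ^^ p = id"
    using pow_ord_eq_1[OF x] assms(4) sym_or_alt_pow[OF sym_or_alt] sym_or_alt_one[OF sym_or_alt] by simp
  moreover have "x \<noteq> id"
    using ord_eq_1[OF x] assms(4) prime_gt_1_nat[OF p] sym_or_alt_one[OF sym_or_alt] by auto
  ultimately obtain \<sigma> where \<sigma>: "\<sigma> permutes {1..p}" and x_conj: "x = \<sigma> \<circ> std_cycle p \<circ> inv' \<sigma>"
    using prime_order_perm_conj_std_cycle[OF p sym_or_alt_permutes[OF sym_or_alt x]] by blast
  have "std_cycle p = inv' \<sigma> \<circ> x \<circ> inv' (inv' \<sigma>)"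
    unfolding x_conj permutes_inv_inv[OF \<sigma>] by (simp add: fun_eq_iff permutes_inverses[OF \<sigma>])
  then have s: "std_cycle p \<in> carrier G"
    using sym_or_alt_conj_closed[OF sym_or_alt permutes_inv[OF \<sigma>] x] by simp
  show ?thesis
    using killing_irreducible_iso[OF is_group sym_or_alt_conj_iso[OF sym_or_alt \<sigma>] s
        killing_irreducible_std_cycle[OF sym_or_alt s p]] x_conj by simp
qed

end
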